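(* Let $n\ge2$. The family $\mathfrak U=\bigcup_{i=0}^{n-1}\mathfrak U_i$, where $\mathfrak U_i=\{g_i+x+V: x\in\Lambda\}$, is a cover of $\mathbb A^{n-1}$ by closed sets.
   Context: $\mathbb A^{n-1}=\{x\in\mathbb R^n:\sum_{i=1}^n x_i=0\}$ with the norm $\|x\|=\sum_i|x_i|$. For a nonempty proper subset $I\subset\{1,\dots,n\}$ with complement $I^c$, set $\phi_I(x)=\frac{\sum_{i\in I}x_i}{\#I}-\frac{\sum_{i\notin I}x_i}{\#I^c}$. Let $V=\{x\in\mathbb A^{n-1}:\phi_I(x)\le\tfrac12$ for all nonempty proper $I\}$ and $\Lambda=\mathbb A^{n-1}\cap\mathbb Z^n$. For $i=0,\dots,n-1$ let $g_i\in\mathbb A^{n-1}$ be the vector with coordinates $(g_i)_j=(i-n)/n$ for $j\le i$ and $(g_i)_j=i/n$ for $j>i$ (so $g_0=0$). *)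

theory Defs
  imports "HOL-Analysis.Analysis"
begin

text \<open>Points of R^n are modelled as functions nat => real, with coordinates
  indexed by {1..n} and all other coordinates equal to 0.\<close>

definition Aff :: "nat \<Rightarrow> (nat \<Rightarrow> real) set" where
  "Aff n = {x. (\<forall>j. j \<notin> {1..n} \<longrightarrow> x j = 0) \<and> (\<Sum>i=1..n. x i) = 0}"

definition l1dist :: "nat \<Rightarrow> (nat \<Rightarrow> real) \<Rightarrow> (nat \<Rightarrow> real) \<Rightarrow> real" where
  "l1dist n x y = (\<Sum>i=1..n. \<bar>x i - y i\<bar>)"

definition phi :: "nat \<Rightarrow> nat set \<Rightarrow> (nat \<Rightarrow> real) \<Rightarrow> real" where
  "phi n I x = (\<Sum>i\<in>I. x i) / real (card I)
             - (\<Sum>i\<in>{1..n} - I. x i) / real (card ({1..n} - I))"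

definition Vset :: "nat \<Rightarrow> (nat \<Rightarrow> real) set" where
  "Vset n = {x \<in> Aff n. \<forall>I. I \<subseteq> {1..n} \<and> I \<noteq> {} \<and> I \<noteq> {1..n} \<longrightarrow> phi n I x \<le> 1/2}"

definition Lat :: "nat \<Rightarrow> (nat \<Rightarrow> real) set" where
  "Lat n = {x \<in> Aff n. \<forall>j. x j \<in> \<int>}"

definition gvec :: "nat \<Rightarrow> nat \<Rightarrow> (nat \<Rightarrow> real)" where
  "gvec n i = (\<lambda>j. if j \<in> {1..n} then
                      (if j \<le> i then (real i - real n) / real n else real i / real n)
                    else 0)"

definition Ucell :: "nat \<Rightarrow> nat \<Rightarrow> (nat \<Rightarrow> real) \<Rightarrow> (nat \<Rightarrow> real) set" where
  "Ucell n i x = {y. \<exists>v\<in>Vset n. y = (\<lambda>j. gvec n i j + x j + v j)}"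

end

(* The cosets g_i + Lambda together form the orthogonal projection of Z^n onto A^{n-1}: the
   projection of an integer vector with coordinate sum s lies in g_i + Lambda for i = -s mod n.
   Given x, take an integer vector whose projection p is Euclidean-nearest to x. Then v = x - p
   lies in V, because phi_I(v) <= 1/2 says exactly that v is no farther from 0 than from the
   projection of the indicator vector of I, and p plus that projection is again a lattice point.
   Closedness holds because every phi_I is 2-Lipschitz for the l1 distance, so each cell is an
   intersection of closed half-spaces. *)

theory Submission
  imports Defs
begin

definition proj_Aff :: "nat \<Rightarrow> (nat \<Rightarrow> real) \<Rightarrow> nat \<Rightarrow> real" where
  "proj_Aff n y = (\<lambda>j. if j \<in> {1..n} then y j - (\<Sum>i=1..n. y i) / real n else 0)"

lemma Aff_add: "a \<in> Aff n \<Longrightarrow> b \<in> Aff n \<Longrightarrow> (\<lambda>j. a j + b j) \<in> Aff n"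
  unfolding Aff_def by (auto simp: sum.distrib)

lemma Aff_diff: "a \<in> Aff n \<Longrightarrow> b \<in> Aff n \<Longrightarrow> (\<lambda>j. a j - b j) \<in> Aff n"
  unfolding Aff_def by (auto simp: sum_subtractf)

lemma proj_Aff_in_Aff: "proj_Aff n y \<in> Aff n"
  unfolding Aff_def proj_Aff_def by (simp add: sum_subtractf)

lemma proj_Aff_add: "proj_Aff n (\<lambda>j. y j + w j) = (\<lambda>j. proj_Aff n y j + proj_Aff n w j)"
  unfolding proj_Aff_def by (auto simp: sum.distrib add_divide_distrib)

lemma proj_Aff_add_const: "n > 0 \<Longrightarrow> proj_Aff n (\<lambda>j. y j + c) = proj_Aff n y"
  unfolding proj_Aff_def by (auto simp: sum.distrib add_divide_distrib)

lemma proj_Aff_cong: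
  assumes "\<And>j. j \<in> {1..n} \<Longrightarrow> y j = w j"
  shows "proj_Aff n y = proj_Aff n w"
proof -
  have "(\<Sum>i=1..n. y i) = (\<Sum>i=1..n. w i)" using assms by (rule sum.cong[OF refl])
  then show ?thesis unfolding proj_Aff_def using assms by auto
qed

lemma sum_of_bool_le: "i \<le> n \<Longrightarrow> (\<Sum>j=1..n. of_bool (j \<le> i)) = (of_nat i :: 'a::comm_semiring_1)"
proof -
  assume "i \<le> n"
  then have "(\<Sum>j=1..n. of_bool (j \<le> i)) = (\<Sum>j=1..i. of_bool (j \<le> i) :: 'a)"
    by (intro sum.mono_neutral_right) auto
  also have "\<dots> = (\<Sum>j=1..i. 1)" by (intro sum.cong) auto
  finally show ?thesis by simp
qed

lemma gvec_eq_proj_Aff: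
  assumes "i \<le> n"
  shows "gvec n i = proj_Aff n (\<lambda>j. - of_bool (j \<le> i))"
proof -
  have "(\<Sum>j=1..n. - of_bool (j \<le> i)) = - real i"
    unfolding sum_negf sum_of_bool_le[OF assms] ..
  then show ?thesis unfolding gvec_def proj_Aff_def fun_eq_iff by (auto simp: field_simps)
qed

lemma proj_int_in_Lat:
  assumes "int n dvd (\<Sum>j=1..n. z j)"
  shows "proj_Aff n (\<lambda>j. of_int (z j)) \<in> Lat n"
proof -
  obtain q where q: "(\<Sum>j=1..n. z j) = int n * q" using assms by (elim dvdE)
  have "proj_Aff n (\<lambda>j. of_int (z j)) j \<in> \<int>" for j
  proof (cases "j \<in> {1..n} ")
    case True
    then have "n > 0" by simp
    have "(\<Sum>i=1..n. real_of_int (z i)) / real n = of_int q"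
      using arg_cong[OF q, of real_of_int] \<open>n > 0\<close> by simp
    then show ?thesis unfolding proj_Aff_def if_P[OF True] by simp
  next
    case False
    then show ?thesis unfolding proj_Aff_def if_not_P[OF False] by simp
  qed
  then show ?thesis using proj_Aff_in_Aff unfolding Lat_def by blast
qed

lemma proj_int_decomposition:
  assumes "n > 0"
  obtains i lam where "i < n" "lam \<in> Lat n"
    "proj_Aff n (\<lambda>j. of_int (z j)) = (\<lambda>j. gvec n i j + lam j)"
proof -
  define s where "s = (\<Sum>j=1..n. z j)"
  define i where "i = nat ((- s) mod int n)"
  have "int i = (- s) mod int n" unfolding i_def using assms by simp
  then have "int n dvd s + int i" by (simp add: mod_0_imp_dvd mod_add_right_eq)
  moreover have "i < n" unfolding i_def using assms by (simp add: nat_less_iff)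
  moreover have "(\<Sum>j=1..n. z j + of_bool (j \<le> i)) = s + int i"
    unfolding sum.distrib s_def sum_of_bool_le[OF less_imp_le[OF \<open>i < n\<close>]] ..
  ultimately have "proj_Aff n (\<lambda>j. of_int (z j + of_bool (j \<le> i))) \<in> Lat n"
    by (intro proj_int_in_Lat) simp
  moreover have "proj_Aff n (\<lambda>j. of_int (z j))
      = (\<lambda>j. gvec n i j + proj_Aff n (\<lambda>j. of_int (z j + of_bool (j \<le> i))) j)"
    using proj_Aff_add[of n "\<lambda>j. of_int (z j + of_bool (j \<le> i))" "\<lambda>j. - of_bool (j \<le> i)"]
      gvec_eq_proj_Aff[of i n] \<open>i < n\<close> by (simp add: add.commute)
  ultimately show ?thesis using that \<open>i < n\<close> by blast
qed

definition sq_norm :: "nat \<Rightarrow> (nat \<Rightarrow> real) \<Rightarrow> real" where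
  "sq_norm n v = (\<Sum>j=1..n. (v j)\<^sup>2)"

lemma sq_norm_diff_proj_indicator:
  assumes "v \<in> Aff n" "I \<subseteq> {1..n}" "n > 0"
  shows "sq_norm n (\<lambda>j. v j - proj_Aff n (indicator I) j)
         = sq_norm n v - 2 * (\<Sum>i\<in>I. v i) + real (card I) * (real n - real (card I)) / real n"
proof -
  define k where "k = real (card I)"
  define p where "p = proj_Aff n (indicator I)"
  have fin: "finite I" using assms(2) finite_subset by blast
  have sum_ind: "(\<Sum>j=1..n. indicator I j * f j) = (\<Sum>j\<in>I. f j)" for f :: "nat \<Rightarrow> real"
    using assms(2) fin by (simp add: indicator_def sum.If_cases Int_absorb1)
  have sum_indicator: "(\<Sum>j=1..n. indicator I j) = k"
    using sum_ind[of "\<lambda>_. 1"] unfolding k_def by simp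
  have p: "p j = indicator I j - k / real n" if "j \<in> {1..n}" for j
    using that sum_indicator unfolding p_def proj_Aff_def by simp
  have inner: "(\<Sum>j=1..n. v j * p j) = (\<Sum>i\<in>I. v i)"
  proof -
    have "(\<Sum>j=1..n. v j * p j) = (\<Sum>j=1..n. indicator I j * v j - k / real n * v j)"
      by (intro sum.cong refl) (simp add: p algebra_simps)
    also have "\<dots> = (\<Sum>j=1..n. indicator I j * v j) - k / real n * (\<Sum>j=1..n. v j)"
      by (simp add: sum_subtractf sum_distrib_left)
    finally show ?thesis using assms(1) sum_ind[of v] unfolding Aff_def by simp
  qed
  have norm_p: "sq_norm n p = k * (real n - k) / real n"
  proof -
    have "sq_norm n p = (\<Sum>j=1..n. indicator I j * (1 - 2 * k / real n) + (k / real n)\<^sup>2)"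
      unfolding sq_norm_def
      by (intro sum.cong refl) (simp add: p indicator_def power2_diff)
    also have "\<dots> = (\<Sum>j=1..n. indicator I j) * (1 - 2 * k / real n) + real n * (k / real n)\<^sup>2"
      by (simp add: sum.distrib sum_distrib_right)
    also have "\<dots> = k * (1 - 2 * k / real n) + real n * (k / real n)\<^sup>2"
      by (simp only: sum_indicator)
    also have "\<dots> = k * (real n - k) / real n"
      using assms(3) by (simp add: field_simps power2_eq_square)
    finally show ?thesis .
  qed
  have "sq_norm n (\<lambda>j. v j - p j) = sq_norm n v - 2 * (\<Sum>j=1..n. v j * p j) + sq_norm n p"
    unfolding sq_norm_def by (simp add: power2_diff sum.distrib sum_subtractf sum_distrib_left mult.assoc)
  then show ?thesis unfolding inner norm_p by (simp only: p_def k_def)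
qed

lemma phi_Aff:
  assumes "v \<in> Aff n" "I \<subseteq> {1..n}"
  shows "phi n I v = (\<Sum>i\<in>I. v i) / real (card I) + (\<Sum>i\<in>I. v i) / (real n - real (card I))"
proof -
  have "(\<Sum>i\<in>{1..n} - I. v i) = (\<Sum>i=1..n. v i) - (\<Sum>i\<in>I. v i)"
    using assms(2) by (simp add: sum_diff)
  also have "\<dots> = - (\<Sum>i\<in>I. v i)" using assms(1) unfolding Aff_def by simp
  moreover have "card I \<le> n" using card_mono[OF _ assms(2)] by simp
  ultimately show ?thesis
    using assms(2) finite_subset[OF assms(2)] by (simp add: phi_def card_Diff_subset of_nat_diff)
qed

text \<open>With \<open>p\<close> the projection of the indicator of \<open>I\<close>, the formulas above give
  \<open>phi n I v = \<langle>v, p\<rangle> / |p|\<^sup>2\<close>; so \<open>phi n I v \<le> 1/2\<close> says that \<open>v\<close> is at least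
  as close to \<open>0\<close> as to \<open>p\<close>.\<close>

lemma phi_le_half_if_nearer:
  assumes "v \<in> Aff n" "I \<subseteq> {1..n}" "I \<noteq> {}" "I \<noteq> {1..n}"
    and nearer: "sq_norm n v \<le> sq_norm n (\<lambda>j. v j - proj_Aff n (indicator I) j)"
  shows "phi n I v \<le> 1/2"
proof -
  define S where "S = (\<Sum>i\<in>I. v i)"
  define k where "k = real (card I)"
  have fin: "finite I" using assms(2) finite_subset by blast
  have "0 < card I" using assms(3) fin by (simp add: card_gt_0_iff)
  moreover have "card I < card {1..n}" using assms(2,4) by (intro psubset_card_mono) auto
  ultimately have k: "0 < k" "k < real n" unfolding k_def by auto
  have "2 * S \<le> k * (real n - k) / real n"
    using nearer sq_norm_diff_proj_indicator[OF assms(1,2)] k unfolding S_def k_def by simp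
  then have "S * real n \<le> k * (real n - k) / 2"
    using k by (simp add: field_simps)
  moreover have "phi n I v = S * real n / (k * (real n - k))"
    using k unfolding phi_Aff[OF assms(1,2)] S_def[symmetric] k_def[symmetric] by (simp add: field_simps)
  moreover have "0 < k * (real n - k)" using k by simp
  ultimately show ?thesis by (simp add: pos_divide_le_eq)
qed

lemma ex_min_if_finite_dominating:
  fixes f :: "'a \<Rightarrow> 'b::linorder"
  assumes "finite F" and dominating: "\<And>z. \<exists>z'\<in>F. f z' \<le> f z"
  obtains z where "\<And>z'. f z \<le> f z'"
proof
  have "F \<noteq> {}" using dominating by blast
  fix z
  obtain z' where "z' \<in> F" "f z' \<le> f z" using dominating by blast
  then show "f (arg_min_on f F) \<le> f z"
    using arg_min_least[OF \<open>finite F\<close> \<open>F \<noteq> {}\<close>] order_trans by blast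
qed

lemma abs_le_one_plus_sq_norm:
  assumes "j \<in> {1..n}"
  shows "\<bar>v j\<bar> \<le> 1 + sq_norm n v"
proof -
  have "(v j)\<^sup>2 \<le> sq_norm n v" unfolding sq_norm_def
    using assms by (intro member_le_sum) auto
  moreover have "\<bar>v j\<bar> \<le> 1 + (v j)\<^sup>2"
    using zero_le_power2[of "\<bar>v j\<bar> - 1"] by (simp add: power2_diff)
  ultimately show ?thesis by linarith
qed

lemma abs_diff_le_dist_proj_Aff:
  fixes x y :: "nat \<Rightarrow> real"
  assumes "j \<in> {1..n}" "k \<in> {1..n}"
  shows "\<bar>y j - y k\<bar> \<le> 2 * ((\<Sum>i=1..n. \<bar>x i\<bar>) + 1 + sq_norm n (\<lambda>i. x i - proj_Aff n y i))"
proof -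
  have bound: "\<bar>proj_Aff n y m\<bar> \<le> (\<Sum>i=1..n. \<bar>x i\<bar>) + 1 + sq_norm n (\<lambda>i. x i - proj_Aff n y i)"
    if "m \<in> {1..n}" for m
  proof -
    have "\<bar>x m\<bar> \<le> (\<Sum>i=1..n. \<bar>x i\<bar>)" using that by (intro member_le_sum) auto
    moreover have "\<bar>x m - proj_Aff n y m\<bar> \<le> 1 + sq_norm n (\<lambda>i. x i - proj_Aff n y i)"
      using abs_le_one_plus_sq_norm[OF that] .
    ultimately show ?thesis by linarith
  qed
  have "y j - y k = proj_Aff n y j - proj_Aff n y k"
    using assms unfolding proj_Aff_def by simp
  then have "\<bar>y j - y k\<bar> \<le> \<bar>proj_Aff n y j\<bar> + \<bar>proj_Aff n y k\<bar>"
    by (simp only: abs_triangle_ineq4)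
  moreover note bound[OF assms(1)] bound[OF assms(2)]
  ultimately show ?thesis by argo
qed

text \<open>Since the projection forgets constant shifts, it suffices to search among integer vectors
  with \<open>z 1 = 0\<close>; those that can beat \<open>z = 0\<close> lie in a bounded box.\<close>

lemma ex_nearest_proj_int:
  assumes "n > 0"
  obtains z :: "nat \<Rightarrow> int" where
    "\<And>z'. sq_norm n (\<lambda>j. x j - proj_Aff n (\<lambda>j. of_int (z j)) j)
          \<le> sq_norm n (\<lambda>j. x j - proj_Aff n (\<lambda>j. of_int (z' j)) j)"
proof -
  define f where "f z = sq_norm n (\<lambda>j. x j - proj_Aff n (\<lambda>j. real_of_int (z j)) j)" for z
  define R where "R = (\<Sum>j=1..n. \<bar>x j\<bar>) + 1 + sq_norm n x"
  define F where "F = (\<Pi>\<^sub>E j\<in>{1..n}. {-\<lceil>2 * R\<rceil>..\<lceil>2 * R\<rceil>})"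
  have R: "0 \<le> R" unfolding R_def sq_norm_def by (simp add: sum_nonneg add_nonneg_nonneg)
  have "\<exists>z'\<in>F. f z' \<le> f z" for z
  proof (cases "f z \<le> sq_norm n x")
    case False
    have "restrict (\<lambda>_. 0) {1..n} \<in> F" unfolding F_def using R by auto
    moreover have "f (restrict (\<lambda>_. 0) {1..n}) = sq_norm n x"
      unfolding f_def by (subst proj_Aff_cong[where w = "\<lambda>_. 0"]) (simp_all add: proj_Aff_def cong: if_cong)
    ultimately show ?thesis using False by (metis linorder_le_cases)
  next
    case True
    define z' where "z' = restrict (\<lambda>j. z j - z 1) {1..n}"
    have 1: "1 \<in> {1..n}" using assms by simp
    have "proj_Aff n (\<lambda>j. real_of_int (z' j)) = proj_Aff n (\<lambda>j. real_of_int (z j) + - z 1)"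
      unfolding z'_def by (intro proj_Aff_cong) simp
    then have proj_eq: "proj_Aff n (\<lambda>j. real_of_int (z' j)) = proj_Aff n (\<lambda>j. real_of_int (z j))"
      using proj_Aff_add_const[OF assms, of "\<lambda>j. real_of_int (z j)" "- z 1"] by simp
    have "z' j \<in> {-\<lceil>2 * R\<rceil>..\<lceil>2 * R\<rceil>}" if "j \<in> {1..n}" for j
    proof -
      have "\<bar>real_of_int (z j) - real_of_int (z 1)\<bar> \<le> 2 * R"
        using abs_diff_le_dist_proj_Aff[OF that 1, of "\<lambda>j. real_of_int (z j)" x] True
        unfolding f_def R_def by argo
      then show ?thesis using that unfolding z'_def by (simp add: abs_le_iff) linarith
    qed
    then have "z' \<in> F" unfolding F_def z'_def by auto
    moreover have "f z' = f z" unfolding f_def proj_eq ..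
    ultimately show ?thesis by (metis order_refl)
  qed
  with ex_min_if_finite_dominating[of F f] that show ?thesis
    unfolding F_def f_def by (auto intro: finite_PiE)
qed

lemma Aff_covered_by_Ucells:
  assumes "n > 0" "x \<in> Aff n"
  obtains i lam where "i < n" "lam \<in> Lat n" "x \<in> Ucell n i lam"
proof -
  obtain z where nearest:
    "\<And>z'. sq_norm n (\<lambda>j. x j - proj_Aff n (\<lambda>j. of_int (z j)) j)
          \<le> sq_norm n (\<lambda>j. x j - proj_Aff n (\<lambda>j. of_int (z' j)) j)"
    using ex_nearest_proj_int[OF assms(1)] by blast
  define p where "p = proj_Aff n (\<lambda>j. of_int (z j))"
  define v where "v = (\<lambda>j. x j - p j)"
  have v_Aff: "v \<in> Aff n" unfolding v_def p_def using assms(2) proj_Aff_in_Aff by (rule Aff_diff)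
  have "v \<in> Vset n" unfolding Vset_def
  proof (intro CollectI conjI allI impI v_Aff)
    fix I assume I: "I \<subseteq> {1..n} \<and> I \<noteq> {} \<and> I \<noteq> {1..n}"
    have "proj_Aff n (\<lambda>j. of_int (z j + of_bool (j \<in> I))) = (\<lambda>j. p j + proj_Aff n (indicator I) j)"
      unfolding p_def proj_Aff_add[symmetric] by (simp add: indicator_def)
    then have "sq_norm n v \<le> sq_norm n (\<lambda>j. v j - proj_Aff n (indicator I) j)"
      using nearest[of "\<lambda>j. z j + of_bool (j \<in> I)"] unfolding v_def p_def by (simp add: algebra_simps)
    then show "phi n I v \<le> 1/2" using I v_Aff by (intro phi_le_half_if_nearer) auto
  qed
  moreover obtain i lam where "i < n" "lam \<in> Lat n" and p: "p = (\<lambda>j. gvec n i j + lam j)"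
    using proj_int_decomposition[OF assms(1)] unfolding p_def by blast
  moreover have "x = (\<lambda>j. gvec n i j + lam j + v j)"
    unfolding v_def p by simp
  ultimately show ?thesis using that unfolding Ucell_def by blast
qed

lemma Metric_space_l1dist: "Metric_space (Aff n) (l1dist n)"
proof
  fix x y z
  show "0 \<le> l1dist n x y" unfolding l1dist_def by (simp add: sum_nonneg)
  show "l1dist n x y = l1dist n y x" unfolding l1dist_def by (simp add: abs_minus_commute)
  assume xy: "x \<in> Aff n" "y \<in> Aff n"
  show "l1dist n x y = 0 \<longleftrightarrow> x = y"
  proof
    assume "l1dist n x y = 0"
    then have "\<forall>i\<in>{1..n}. \<bar>x i - y i\<bar> = 0" unfolding l1dist_def
      by (subst (asm) sum_nonneg_eq_0_iff) auto
    then show "x = y" using xy unfolding Aff_def by (auto intro!: ext)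
  qed (simp add: l1dist_def)
  have "(\<Sum>i=1..n. \<bar>x i - z i\<bar>) \<le> (\<Sum>i=1..n. \<bar>x i - y i\<bar> + \<bar>y i - z i\<bar>)"
    by (intro sum_mono) linarith
  then show "l1dist n x z \<le> l1dist n x y + l1dist n y z"
    unfolding l1dist_def by (simp add: sum.distrib)
qed

lemma phi_diff: "phi n I (\<lambda>j. a j - b j) = phi n I a - phi n I b"
  unfolding phi_def sum_subtractf diff_divide_distrib by linarith

lemma abs_average_le_l1:
  fixes n :: nat
  assumes "J \<subseteq> {1..n}"
  shows "\<bar>(\<Sum>i\<in>J. w i) / real (card J)\<bar> \<le> (\<Sum>i=1..n. \<bar>w i\<bar>)"
proof -
  have "\<bar>(\<Sum>i\<in>J. w i) / real (card J)\<bar> \<le> \<bar>\<Sum>i\<in>J. w i\<bar>"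
    by (cases "card J = 0") (simp_all add: abs_divide pos_divide_le_eq mult_le_cancel_left1)
  also have "\<dots> \<le> (\<Sum>i\<in>J. \<bar>w i\<bar>)" by (rule sum_abs)
  also have "\<dots> \<le> (\<Sum>i=1..n. \<bar>w i\<bar>)" using assms by (intro sum_mono2) auto
  finally show ?thesis .
qed

lemma phi_Lipschitz:
  assumes "I \<subseteq> {1..n}"
  shows "\<bar>phi n I a - phi n I b\<bar> \<le> 2 * l1dist n a b"
proof -
  have "\<bar>phi n I (\<lambda>j. a j - b j)\<bar> \<le> 2 * l1dist n a b"
    using abs_average_le_l1[OF assms, of "\<lambda>j. a j - b j"]
      abs_average_le_l1[of "{1..n} - I" n "\<lambda>j. a j - b j", OF Diff_subset]
      abs_triangle_ineq4
    unfolding phi_def l1dist_def by argo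
  then show ?thesis by (simp only: phi_diff)
qed

lemma continuous_map_phi:
  assumes "I \<subseteq> {1..n}"
  shows "continuous_map (Metric_space.mtopology (Aff n) (l1dist n)) euclideanreal (phi n I)"
proof -
  interpret Metric_space "Aff n" "l1dist n" by (rule Metric_space_l1dist)
  have "Lipschitz_continuous_map (metric (Aff n, l1dist n)) euclidean_metric (phi n I)"
    unfolding Lipschitz_continuous_map_def using phi_Lipschitz[OF assms]
    by (auto simp: dist_real_def)
  then show ?thesis using Lipschitz_continuous_imp_continuous_map by fastforce
qed

lemma closedin_Collect_all_le:
  assumes "\<And>I. I \<in> P \<Longrightarrow> continuous_map X euclideanreal (f I)"
  shows "closedin X {y \<in> topspace X. \<forall>I\<in>P. f I y \<le> b I}"
proof (cases "P = {}")
  case False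
  have "{y \<in> topspace X. \<forall>I\<in>P. f I y \<le> b I} = (\<Inter>I\<in>P. {y \<in> topspace X. f I y \<in> {..b I}})"
    using False by auto
  also have "closedin X \<dots>"
    using False assms by (intro closedin_INT closedin_continuous_map_preimage) auto
  finally show ?thesis .
qed simp

lemma Ucell_eq_halfspaces:
  assumes "i < n" "lam \<in> Lat n"
  shows "Ucell n i lam = {y \<in> Aff n. \<forall>I\<in>{I. I \<subseteq> {1..n} \<and> I \<noteq> {} \<and> I \<noteq> {1..n}}.
           phi n I y \<le> 1/2 + phi n I (\<lambda>j. gvec n i j + lam j)}"
proof -
  define c where "c = (\<lambda>j. gvec n i j + lam j)"
  have c_Aff: "c \<in> Aff n"
    unfolding c_def gvec_eq_proj_Aff[OF less_imp_le[OF assms(1)]]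
    using proj_Aff_in_Aff assms(2) unfolding Lat_def by (blast intro: Aff_add)
  have "y \<in> Ucell n i lam \<longleftrightarrow> (\<lambda>j. y j - c j) \<in> Vset n" for y
  proof
    assume "(\<lambda>j. y j - c j) \<in> Vset n"
    moreover have "y = (\<lambda>j. gvec n i j + lam j + (y j - c j))" unfolding c_def by simp
    ultimately show "y \<in> Ucell n i lam" unfolding Ucell_def by (intro CollectI bexI)
  qed (auto simp: Ucell_def c_def)
  moreover have "(\<lambda>j. y j - c j) \<in> Aff n \<longleftrightarrow> y \<in> Aff n" for y
    using Aff_diff[OF _ c_Aff, of y] Aff_add[OF _ c_Aff, of "\<lambda>j. y j - c j"] by auto
  ultimately show ?thesis
    unfolding c_def[symmetric] by (simp only: Vset_def mem_Collect_eq phi_diff diff_le_eq Ball_def) blast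
qed

lemma Ucell_closedin:
  assumes "i < n" "lam \<in> Lat n"
  shows "closedin (Metric_space.mtopology (Aff n) (l1dist n)) (Ucell n i lam)"
proof -
  let ?X = "Metric_space.mtopology (Aff n) (l1dist n)"
  have "closedin ?X {y \<in> topspace ?X. \<forall>I\<in>{I. I \<subseteq> {1..n} \<and> I \<noteq> {} \<and> I \<noteq> {1..n}}.
           phi n I y \<le> 1/2 + phi n I (\<lambda>j. gvec n i j + lam j)}"
    by (rule closedin_Collect_all_le, rule continuous_map_phi) blast
  then show ?thesis
    unfolding Ucell_eq_halfspaces[OF assms] Metric_space.topspace_mtopology[OF Metric_space_l1dist] .
qed

theorem lemma4p1p2:
  fixes n :: nat
  assumes "n \<ge> 2"
  shows "Aff n = (\<Union>i<n. \<Union>x\<in>Lat n. Ucell n i x)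
         \<and> (\<forall>i<n. \<forall>x\<in>Lat n.
              closedin (Metric_space.mtopology (Aff n) (l1dist n)) (Ucell n i x))"
proof (intro conjI allI impI ballI equalityI subsetI)
  fix x assume "x \<in> Aff n"
  moreover have "n > 0" using assms by simp
  ultimately obtain i lam where "i < n" "lam \<in> Lat n" "x \<in> Ucell n i lam"
    using Aff_covered_by_Ucells by blast
  then show "x \<in> (\<Union>i<n. \<Union>x\<in>Lat n. Ucell n i x)" by blast
next
  fix x assume "x \<in> (\<Union>i<n. \<Union>x\<in>Lat n. Ucell n i x)"
  then show "x \<in> Aff n" using Ucell_eq_halfspaces by blast
qed (rule Ucell_closedin)

end
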